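(* Let $0\le r\le q^2$. If there exists a line spread $\mathcal F$ of $\mathrm{PG}(3,q)$ having exactly $r$ lines in common with the Desarguesian spread $\mathcal D$, then $\mathrm{PG}(3,q)$ admits a mixed partition of type $r$.
   Context: Let $q$ be a prime power, $F=\mathbb F_q$, $L=\mathbb F_{q^4}$, regarded as a 4-dimensional $F$-vector space; $\mathrm{PG}(3,q)$ has as points the one-dimensional subspaces $Fx$, $x\in L^*$, and as lines the two-dimensional $F$-subspaces (identified with their point sets). Let $C$ be the subfield of $L$ of order $q^2$ and $\mathcal D=\{Cx:x\in L^*\}$ the Desarguesian line spread. A line spread is a set of lines partitioning the point set. For $r\ge1$, a set $X$ of points of a projective space $\mathrm{PG}(V)$ over $F$ is the image of an $r$-uple embedding if there is an injective $F$-linear map $\phi:F^{r+1}\to V$ with $X=\{F\phi(t_0^r,t_0^{r-1}t_1,\dots,t_1^r):(t_0,t_1)\in F^2\setminus\{(0,0)\}\}$. A mixed partition of type $r$ of $\mathrm{PG}(3,q)$ ($0\le r\le q^2$) is a partition of its point set into $r$ lines and $q^2+1-r$ sets each of which is the image of a $3$-uple embedding (normal rational curves of order three, i.e. twisted cubics, when $q\ge3$). *)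

theory Defs
  imports "HOL-Computational_Algebra.Primes"
begin

text \<open>Ambient field L = GF(q^4) is a finite field type 'a with CARD('a) = q^4.
  Its subfield of order q^k is the set of roots of x^(q^k) = x.\<close>

definition prime_power :: "nat \<Rightarrow> bool" where
  "prime_power q \<longleftrightarrow> (\<exists>p k. prime p \<and> k \<ge> 1 \<and> q = p ^ k)"

definition subf :: "nat \<Rightarrow> 'a::{field,finite} set" where
  "subf m = {x. x ^ m = x}"

definition pt :: "nat \<Rightarrow> 'a::{field,finite} \<Rightarrow> 'a set" where
  "pt q x = {c * x | c. c \<in> subf q}"

definition points :: "nat \<Rightarrow> 'a::{field,finite} set set" where
  "points q = pt q ` (UNIV - {0})"

definition is_line :: "nat \<Rightarrow> 'a::{field,finite} set \<Rightarrow> bool" where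
  "is_line q S \<longleftrightarrow> (\<exists>a b. (\<forall>c\<in>subf q. \<forall>d\<in>subf q. c * a + d * b = 0 \<longrightarrow> c = 0 \<and> d = 0)
      \<and> S = {c * a + d * b | c d. c \<in> subf q \<and> d \<in> subf q})"

definition line_points :: "nat \<Rightarrow> 'a::{field,finite} set \<Rightarrow> 'a set set" where
  "line_points q S = pt q ` (S - {0})"

definition is_line_spread :: "nat \<Rightarrow> 'a::{field,finite} set set \<Rightarrow> bool" where
  "is_line_spread q Fs \<longleftrightarrow> (\<forall>S\<in>Fs. is_line q S) \<and>
     (\<forall>p\<in>points q. \<exists>!S. S \<in> Fs \<and> p \<in> line_points q S)"

definition desarg_spread :: "nat \<Rightarrow> 'a::{field,finite} set set" where
  "desarg_spread q = (\<lambda>x. {c * x | c. c \<in> subf (q^2)}) ` (UNIV - {0})"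

text \<open>Image of a 3-uple embedding: phi injective F-linear F^4 -> L is given by
  the images e0..e3 of the standard basis, which are F-linearly independent.\<close>
definition is_3uple_image :: "nat \<Rightarrow> 'a::{field,finite} set set \<Rightarrow> bool" where
  "is_3uple_image q X \<longleftrightarrow> (\<exists>e :: nat \<Rightarrow> 'a.
     (\<forall>a :: nat \<Rightarrow> 'a. (\<forall>i<4. a i \<in> subf q) \<longrightarrow> (\<Sum>i<4. a i * e i) = 0 \<longrightarrow> (\<forall>i<4. a i = 0)) \<and>
     X = {pt q (t0^3 * e 0 + t0^2 * t1 * e 1 + t0 * t1^2 * e 2 + t1^3 * e 3) | t0 t1.
            t0 \<in> subf q \<and> t1 \<in> subf q \<and> (t0, t1) \<noteq> (0, 0)})"

definition has_mixed_partition :: "nat \<Rightarrow> nat \<Rightarrow> 'a::{field,finite} itself \<Rightarrow> bool" where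
  "has_mixed_partition q r _ \<longleftrightarrow> (\<exists>(Lns :: 'a set set set) Cub.
     (\<forall>X\<in>Lns. \<exists>S. is_line q S \<and> X = line_points q S) \<and>
     (\<forall>X\<in>Cub. is_3uple_image q X) \<and>
     Lns \<inter> Cub = {} \<and> card Lns = r \<and> card Cub = q^2 + 1 - r \<and>
     (\<forall>p\<in>points q. \<exists>!X. X \<in> Lns \<union> Cub \<and> p \<in> X))"

end

theory Submission imports Defs "HOL-Computational_Algebra.Polynomial" begin

text \<open>The map \<open>trinorm y = y ^ (1 + q + q\<^sup>2) = y * y ^ q * y ^ q\<^sup>2\<close> of \<open>L\<close> induces a
  permutation of the points of PG(3,q), because \<open>1 + q + q\<^sup>2\<close> is coprime to
  \<open>(q\<^sup>4 - 1) / (q - 1)\<close> and \<open>y ^ ((q\<^sup>4 - 1) / (q - 1))\<close> lies in \<open>F\<close>. It maps a line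
  \<open>C x\<close> of the Desarguesian spread onto another line, and a line \<open>F a + F b\<close> with
  \<open>u = a / b \<notin> C\<close> onto the point set of
  \<open>trinorm b * (t\<^sub>0 u + t\<^sub>1) (t\<^sub>0 u\<^sup>q + t\<^sub>1) (t\<^sub>0 u\<^sup>q\<^sup>2 + t\<^sub>1)\<close>, a cubic form in
  \<open>(t\<^sub>0, t\<^sub>1)\<close> whose four coefficients are \<open>F\<close>-independent since \<open>u\<close> has degree 4
  over \<open>F\<close>. Hence the images of the lines of a spread sharing \<open>r\<close> lines with the
  Desarguesian one form a mixed partition of type \<open>r\<close>.\<close>

lemma of_nat_card_UNIV_eq_0: "of_nat (card (UNIV :: 'a set)) = (0 :: 'a :: {ring_1, finite})"
proof -
  have "(\<Sum>y\<in>UNIV. y + 1) = (\<Sum>y\<in>UNIV. y :: 'a)"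
    by (rule sum.reindex_bij_witness[of _ "\<lambda>y. y - 1" "\<lambda>y. y + 1"]) auto
  thus ?thesis by (simp add: sum.distrib)
qed

lemma prime_CHAR_finite: "prime CHAR('a :: {idom, finite})"
  by (intro prime_CHAR_semidom finite_imp_CHAR_pos) simp

text \<open>As \<open>finite_field_power_card_eq_same\<close>, but for the sort \<open>{field, finite}\<close> rather
  than the class \<open>finite_field\<close>.\<close>
lemma power_card_UNIV_eq_self: "x ^ card (UNIV :: 'a set) = (x :: 'a :: {field, finite})"
proof (cases "x = 0")
  case False
  have "(\<Prod>y\<in>UNIV-{0}. x * y) = (\<Prod>y\<in>UNIV-{0}. y)"
    by (rule prod.reindex_bij_witness[of _ "\<lambda>y. y / x" "\<lambda>y. x * y"]) (use False in auto)
  hence "x ^ (card (UNIV :: 'a set) - 1) = 1"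
    by (simp add: prod.distrib card_Diff_singleton)
  thus ?thesis
    using finite_UNIV_card_ge_0[where ?'a = 'a] by (cases "card (UNIV :: 'a set)") auto
qed (simp add: finite_UNIV_card_ge_0)

lemma card_roots_power_eq_le:
  assumes "n \<ge> 2"
  shows "card {x :: 'a :: idom. x ^ n = a * x + c} \<le> n"
proof -
  let ?P = "monom 1 n - [:c, a:]"
  have "coeff ?P n = 1" using assms by (cases n; cases "n - 1") auto
  hence "card {x. poly ?P x = 0} \<le> degree ?P"
    by (intro card_poly_roots_bound) (metis coeff_0 zero_neq_one)
  also have "degree ?P \<le> n"
    using assms by (intro degree_diff_le) (auto simp: degree_monom_le)
  finally show ?thesis by (simp add: poly_monom algebra_simps)
qed

lemma subf_mult: "x \<in> subf m \<Longrightarrow> y \<in> subf m \<Longrightarrow> x * y \<in> subf m"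
  by (simp add: subf_def power_mult_distrib)

lemma subf_power: "x \<in> subf m \<Longrightarrow> x ^ n \<in> subf m"
  by (simp add: subf_def flip: power_mult) (simp add: power_mult mult.commute[of n])

lemma subf_inverse: "x \<in> subf m \<Longrightarrow> inverse x \<in> subf m"
  by (simp add: subf_def power_inverse)

lemma subf_one: "1 \<in> subf m"
  by (simp add: subf_def)

lemma subf_zero: "m > 0 \<Longrightarrow> 0 \<in> subf m"
  by (simp add: subf_def)

section \<open>Subfields of a field of order \<open>q\<^sup>4\<close>\<close>

locale gf_q4 =
  fixes q :: nat
  assumes prime_power_q: "prime_power q"
    and card_UNIV: "card (UNIV :: 'a :: {field, finite} set) = q ^ 4"
begin

abbreviation F :: "'a set" where "F \<equiv> subf q"
abbreviation C :: "'a set" where "C \<equiv> subf (q ^ 2)"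

lemma q_power_of_CHAR: obtains e where "q = CHAR('a) ^ e" "e \<ge> 1"
proof -
  obtain p e where p: "prime p" "e \<ge> 1" "q = p ^ e"
    using prime_power_q unfolding prime_power_def by blast
  have "of_nat (p ^ (e * 4)) = (0 :: 'a)"
    using of_nat_card_UNIV_eq_0[where ?'a = 'a] by (simp add: card_UNIV p(3) power_mult)
  hence "CHAR('a) dvd p ^ (e * 4)"
    by (simp only: of_nat_eq_0_iff_char_dvd)
  hence "CHAR('a) dvd p"
    using prime_CHAR_finite prime_dvd_power by blast
  hence "CHAR('a) = p"
    using prime_CHAR_finite p(1) primes_dvd_imp_eq by blast
  with p that show thesis by blast
qed

lemma q_ge_2: "q \<ge> 2"
proof -
  obtain e where e: "q = CHAR('a) ^ e" "e \<ge> 1" by (rule q_power_of_CHAR)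
  have "2 \<le> CHAR('a)" using prime_CHAR_finite prime_ge_2_nat by blast
  also have "CHAR('a) \<le> q"
    using e \<open>2 \<le> CHAR('a)\<close> by (simp add: self_le_power)
  finally show ?thesis .
qed

lemma frobenius_add: "((x :: 'a) + y) ^ (q ^ j) = x ^ (q ^ j) + y ^ (q ^ j)"
proof -
  obtain e where "q = CHAR('a) ^ e" by (rule q_power_of_CHAR)
  thus ?thesis
    by (intro freshmans_dream'[OF prime_CHAR_finite, of _ "e * j"]) (simp add: power_mult)
qed

lemma frobenius_uminus: "(- (x :: 'a)) ^ (q ^ j) = - (x ^ (q ^ j))"
proof -
  have "(0 :: 'a) ^ (q ^ j) = 0" using q_ge_2 by simp
  hence "x ^ (q ^ j) + (- x) ^ (q ^ j) = 0"
    using frobenius_add[of x "- x" j] by (metis add.right_inverse)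
  thus ?thesis by (simp add: eq_neg_iff_add_eq_0 add.commute)
qed

lemma frobenius_diff: "((x :: 'a) - y) ^ (q ^ j) = x ^ (q ^ j) - y ^ (q ^ j)"
  using frobenius_add[of x "- y" j] by (simp add: frobenius_uminus)

lemma power_q4: "(x :: 'a) ^ (q ^ 4) = x"
  using power_card_UNIV_eq_self[of x] by (simp add: card_UNIV)

lemma power_q_power_Suc: "(x :: 'a) ^ (q ^ Suc j) = (x ^ (q ^ j)) ^ q"
  by (simp add: power_mult mult.commute[of q])

lemma power_q_power_4: "(x :: 'a) ^ (q ^ (4 * j)) = x"
proof (induction j)
  case (Suc j)
  have "x ^ (q ^ (4 * Suc j)) = (x ^ (q ^ 4)) ^ (q ^ (4 * j))"
    by (simp flip: power_mult power_add)
  thus ?case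
    using Suc by (simp add: power_q4)
qed simp

lemma power_q_power_inj:
  assumes "(x :: 'a) ^ (q ^ j) = y ^ (q ^ j)"
  shows "x = y"
proof -
  have "x ^ (q ^ (4 * j)) = y ^ (q ^ (4 * j))"
    using arg_cong[OF assms, of "\<lambda>z. z ^ (q ^ (3 * j))"]
    by (simp flip: power_mult power_add)
  thus ?thesis by (simp only: power_q_power_4)
qed

lemma subf_add: "x \<in> subf (q ^ j) \<Longrightarrow> y \<in> subf (q ^ j) \<Longrightarrow> (x :: 'a) + y \<in> subf (q ^ j)"
  by (simp add: subf_def frobenius_add)

lemma subf_uminus: "x \<in> subf (q ^ j) \<Longrightarrow> - (x :: 'a) \<in> subf (q ^ j)"
  by (simp add: subf_def frobenius_uminus)

lemma subf_diff: "x \<in> subf (q ^ j) \<Longrightarrow> y \<in> subf (q ^ j) \<Longrightarrow> (x :: 'a) - y \<in> subf (q ^ j)"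
  by (simp add: subf_def frobenius_diff)

lemmas power_q_add = frobenius_add[where j = 1, simplified]

lemmas F_add = subf_add[where j = 1, simplified]
lemmas F_uminus = subf_uminus[where j = 1, simplified]
lemmas F_diff = subf_diff[where j = 1, simplified]

lemma zero_in_F: "0 \<in> F"
  using q_ge_2 by (simp add: subf_zero)

lemma F_subset_C: "F \<subseteq> C"
  by (auto simp: subf_def power2_eq_square power_mult)

lemma F_fixed: "c \<in> F \<Longrightarrow> c ^ (q ^ j) = c"
  by (induction j) (simp_all add: subf_def power_mult)

lemma power_q_power_F_affine:
  "c \<in> F \<Longrightarrow> d \<in> F \<Longrightarrow> (c * u + d) ^ (q ^ j) = c * u ^ (q ^ j) + d"
  by (simp add: frobenius_add power_mult_distrib F_fixed)

definition norm_exp :: nat where "norm_exp = 1 + q + q ^ 2 + q ^ 3"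

lemma norm_exp_mult_q_minus_1: "(q - 1) * norm_exp = q ^ 4 - 1"
proof -
  have "int ((q - 1) * norm_exp) = int (q ^ 4 - 1)"
    using q_ge_2 by (simp add: of_nat_diff norm_exp_def algebra_simps eval_nat_numeral)
  thus ?thesis by (simp only: of_nat_eq_iff)
qed

lemma norm_exp_ge_2: "norm_exp \<ge> 2"
  using q_ge_2 by (simp add: norm_exp_def)

lemma norm_power_in_F: "(y :: 'a) ^ norm_exp \<in> F"
proof -
  have "(y ^ norm_exp) ^ q = y ^ (q ^ 4) * y ^ (q + q ^ 2 + q ^ 3)"
    by (simp add: norm_exp_def algebra_simps eval_nat_numeral flip: power_mult power_add)
  thus ?thesis
    by (simp add: subf_def power_q4 norm_exp_def power_add mult.commute)
qed

lemma card_F: "card F = q"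
proof (rule antisym)
  show "card F \<le> q"
    using card_roots_power_eq_le[of q 1 0] q_ge_2 by (simp add: subf_def)
next
  have "UNIV - {0 :: 'a} \<subseteq> (\<Union>c\<in>F - {0}. {x. x ^ norm_exp = c})"
    using norm_power_in_F by auto
  hence "card (UNIV - {0 :: 'a}) \<le> (\<Sum>c\<in>F - {0}. card {x :: 'a. x ^ norm_exp = c})"
    by (intro order_trans[OF card_mono card_UN_le]) auto
  also have "\<dots> \<le> (\<Sum>c\<in>F - {0}. norm_exp)"
    using card_roots_power_eq_le[of norm_exp 0] norm_exp_ge_2 by (intro sum_mono) simp
  finally have "q ^ 4 - 1 \<le> card (F - {0}) * norm_exp"
    by (simp add: card_UNIV card_Diff_singleton)
  hence "(q - 1) * norm_exp \<le> card (F - {0}) * norm_exp"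
    by (simp only: norm_exp_mult_q_minus_1)
  moreover have "norm_exp > 0"
    using norm_exp_ge_2 by simp
  ultimately have "q - 1 \<le> card (F - {0})"
    by (metis mult_le_cancel2)
  hence "q - 1 \<le> card F - 1"
    using zero_in_F by (simp add: card_Diff_singleton)
  moreover have "card F > 0"
    using zero_in_F by (auto simp: card_gt_0_iff)
  ultimately show "q \<le> card F" using q_ge_2 by linarith
qed

lemma pt_self: "(x :: 'a) \<in> pt q x"
  unfolding pt_def using subf_one by force

lemma pt_eqD: "pt q (y :: 'a) = pt q x \<Longrightarrow> \<exists>f\<in>F. y = f * x"
  using pt_self[of y] unfolding pt_def by auto

lemma pt_eqI:
  assumes "y = f * x" "f \<in> F" "(y :: 'a) \<noteq> 0"
  shows "pt q y = pt q x"
proof -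
  have "f \<noteq> 0" using assms by auto
  show ?thesis
    unfolding pt_def assms(1)
  proof (intro set_eqI iffI; elim CollectE exE conjE)
    fix z c assume "z = c * (f * x)" "c \<in> F"
    thus "z \<in> {c * x |c. c \<in> F}"
      using subf_mult[OF _ assms(2), of c] by (auto simp: mult.assoc)
  next
    fix z c assume "z = c * x" "c \<in> F"
    thus "z \<in> {c * (f * x) |c. c \<in> F}"
      using subf_mult[OF _ subf_inverse[OF assms(2)], of c] \<open>f \<noteq> 0\<close>
      by (intro CollectI exI[of _ "c * inverse f"]) (auto simp: mult.assoc)
  qed
qed

section \<open>The map \<open>trinorm\<close>\<close>

definition trinorm :: "'a \<Rightarrow> 'a" where "trinorm y = y ^ (1 + q + q ^ 2)"

lemma trinorm_mult: "trinorm (x * y) = trinorm x * trinorm y"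
  by (simp add: trinorm_def power_mult_distrib)

lemma trinorm_eq_product: "trinorm y = y * y ^ q * y ^ (q ^ 2)"
  by (simp add: trinorm_def power_add)

lemma trinorm_power: "trinorm (z ^ n) = trinorm z ^ n"
  unfolding trinorm_def by (metis power_mult mult.commute)

lemma trinorm_eq_0_iff [simp]: "trinorm y = 0 \<longleftrightarrow> y = 0"
  by (auto simp: trinorm_def)

lemma trinorm_in_C: "c \<in> C \<Longrightarrow> trinorm c \<in> C"
  unfolding trinorm_def by (rule subf_power)

lemma coprime_trinorm_exp_norm_exp: "coprime (1 + q + q ^ 2) norm_exp"
proof -
  have "1 + q + q ^ 2 = (1 + q) * q + 1"
    by (simp add: power2_eq_square algebra_simps)
  hence "coprime q (1 + q + q ^ 2)"
    by (simp only: coprime_iff_gcd_eq_1 gcd_add_mult gcd_1_nat)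
  hence "coprime (1 + q + q ^ 2) (q ^ 3)"
    by (simp add: coprime_commute)
  thus ?thesis
    by (simp only: norm_exp_def coprime_iff_gcd_eq_1 gcd_add2)
qed

lemma trinorm_power_inverse:
  obtains m k where "\<And>z. trinorm (z ^ m) = (z ^ norm_exp) ^ k * z"
proof -
  obtain m k where mk: "(1 + q + q ^ 2) * m = norm_exp * k + 1"
    using bezout_nat[of "1 + q + q ^ 2" norm_exp] coprime_trinorm_exp_norm_exp
    by (auto simp: coprime_iff_gcd_eq_1)
  have "trinorm (z ^ m) = (z ^ norm_exp) ^ k * z" for z
  proof -
    have "trinorm (z ^ m) = trinorm z ^ m"
      by (rule trinorm_power)
    also have "\<dots> = z ^ ((1 + q + q ^ 2) * m)"
      unfolding trinorm_def by (rule power_mult[symmetric])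
    also have "\<dots> = (z ^ norm_exp) ^ k * z"
      by (simp only: mk power_add power_mult power_one_right)
    finally show ?thesis .
  qed
  thus thesis by (rule that)
qed

lemma pt_trinorm_inj:
  assumes "(y1 :: 'a) \<noteq> 0" "y2 \<noteq> 0" "pt q (trinorm y1) = pt q (trinorm y2)"
  shows "pt q y1 = pt q y2"
proof -
  obtain m k where mk: "\<And>z. trinorm (z ^ m) = (z ^ norm_exp) ^ k * z"
    using trinorm_power_inverse by blast
  obtain f where f: "f \<in> F" "trinorm y1 = f * trinorm y2"
    using pt_eqD[OF assms(3)] by blast
  have "(y1 ^ norm_exp) ^ k * y1 = f ^ m * ((y2 ^ norm_exp) ^ k * y2)"
    using arg_cong[OF f(2), of "\<lambda>z. z ^ m"]
    by (simp only: power_mult_distrib trinorm_power[symmetric] mk)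
  hence "y1 = (f ^ m * (y2 ^ norm_exp) ^ k * inverse ((y1 ^ norm_exp) ^ k)) * y2"
    using assms(1) by (simp add: field_simps)
  moreover have "f ^ m * (y2 ^ norm_exp) ^ k * inverse ((y1 ^ norm_exp) ^ k) \<in> F"
    using f(1) norm_power_in_F[of y1] norm_power_in_F[of y2]
    by (simp add: subf_mult subf_inverse subf_power)
  ultimately show ?thesis using pt_eqI assms(1) by blast
qed

lemma pt_trinorm_power_inverse:
  obtains m where "\<And>z. z \<noteq> 0 \<Longrightarrow> pt q (trinorm (z ^ m)) = pt q z"
proof -
  obtain m k where mk: "\<And>z. trinorm (z ^ m) = (z ^ norm_exp) ^ k * z"
    using trinorm_power_inverse by blast
  have "pt q (trinorm (z ^ m)) = pt q z" if "z \<noteq> 0" for z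
    using that norm_power_in_F[of z] by (intro pt_eqI[OF mk]) (auto intro: subf_power)
  thus thesis by (rule that)
qed

definition F_span :: "'a \<Rightarrow> 'a \<Rightarrow> 'a set" where
  "F_span a b = {c * a + d * b | c d. c \<in> F \<and> d \<in> F}"

definition F_indep :: "'a \<Rightarrow> 'a \<Rightarrow> bool" where
  "F_indep a b \<longleftrightarrow> (\<forall>c\<in>F. \<forall>d\<in>F. c * a + d * b = 0 \<longrightarrow> c = 0 \<and> d = 0)"

lemma is_line_iff: "is_line q S \<longleftrightarrow> (\<exists>a b. F_indep a b \<and> S = F_span a b)"
  unfolding is_line_def F_indep_def F_span_def by simp

lemma F_indep_nonzero: "F_indep a b \<Longrightarrow> a \<noteq> 0 \<and> b \<noteq> 0"
  unfolding F_indep_def using zero_in_F subf_one[of q]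
  by (metis add.left_neutral add.right_neutral mult_1 mult_zero_left one_neq_zero)

lemma zero_in_F_span: "0 \<in> F_span a b"
  unfolding F_span_def using zero_in_F by force

lemma F_span_mult_closed:
  assumes "y \<in> F_span a b" "f \<in> F"
  shows "f * y \<in> F_span a b"
proof -
  obtain c d where "c \<in> F" "d \<in> F" "y = c * a + d * b"
    using assms(1) unfolding F_span_def by blast
  thus ?thesis
    unfolding F_span_def using subf_mult[OF assms(2)]
    by (intro CollectI exI[of _ "f * c"] exI[of _ "f * d"]) (auto simp: algebra_simps)
qed

lemma card_F_span:
  assumes "F_indep a b"
  shows "card (F_span a b) = q ^ 2"
proof -
  have "F_span a b = (\<lambda>(c, d). c * a + d * b) ` (F \<times> F)"
    unfolding F_span_def by auto
  moreover have "inj_on (\<lambda>(c, d). c * a + d * b) (F \<times> F)"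
  proof (rule inj_onI, clarify)
    fix c d c' d'
    assume "c \<in> F" "d \<in> F" "c' \<in> F" "d' \<in> F" "c * a + d * b = c' * a + d' * b"
    hence "(c - c') * a + (d - d') * b = 0"
      by (simp add: algebra_simps)
    hence "c - c' = 0 \<and> d - d' = 0"
      using assms F_diff \<open>c \<in> F\<close> \<open>d \<in> F\<close> \<open>c' \<in> F\<close> \<open>d' \<in> F\<close>
      unfolding F_indep_def by blast
    thus "c = c' \<and> d = d'" by simp
  qed
  ultimately show ?thesis
    by (simp add: card_image card_cartesian_product card_F power2_eq_square)
qed

lemma image_mult_F_span: "(*) l ` F_span a b = F_span (l * a) (l * b)"
proof (intro set_eqI iffI)
  have eq: "l * (c * a + d * b) = c * (l * a) + d * (l * b)" for c d
    by (simp add: algebra_simps)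
  fix z
  show "z \<in> (*) l ` F_span a b \<Longrightarrow> z \<in> F_span (l * a) (l * b)"
    unfolding F_span_def using eq by auto
  assume "z \<in> F_span (l * a) (l * b)"
  then obtain c d where "c \<in> F" "d \<in> F" "z = c * (l * a) + d * (l * b)"
    unfolding F_span_def by blast
  thus "z \<in> (*) l ` F_span a b"
    unfolding F_span_def using eq[of c d] by (intro image_eqI[of _ _ "c * a + d * b"]) auto
qed

lemma F_indep_mult:
  assumes "F_indep a b" "l \<noteq> 0"
  shows "F_indep (l * a) (l * b)"
  unfolding F_indep_def
proof (intro ballI impI)
  fix c d assume "c \<in> F" "d \<in> F" "c * (l * a) + d * (l * b) = 0"
  moreover have "c * (l * a) + d * (l * b) = l * (c * a + d * b)"
    by (simp add: algebra_simps)
  ultimately show "c = 0 \<and> d = 0"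
    using assms unfolding F_indep_def by simp
qed

lemma is_line_image_mult:
  assumes "is_line q S" "(l :: 'a) \<noteq> 0"
  shows "is_line q ((*) l ` S)"
proof -
  obtain a b where "F_indep a b" "S = F_span a b"
    using assms(1) unfolding is_line_iff by blast
  thus ?thesis
    unfolding is_line_iff using assms(2) image_mult_F_span F_indep_mult by metis
qed

lemma in_F_span_right: "b \<in> F_span a b"
  unfolding F_span_def using zero_in_F subf_one[of q] by force

lemma line_nonzero: "is_line q S \<Longrightarrow> \<exists>y\<in>S. y \<noteq> (0 :: 'a)"
  unfolding is_line_iff using F_indep_nonzero in_F_span_right by blast

lemma pt_in_line_points_iff:
  assumes "is_line q S" "(z :: 'a) \<noteq> 0"
  shows "pt q z \<in> line_points q S \<longleftrightarrow> z \<in> S"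
proof
  assume "pt q z \<in> line_points q S"
  then obtain y where "y \<in> S" "pt q z = pt q y"
    unfolding line_points_def by auto
  thus "z \<in> S"
    using assms(1) pt_eqD F_span_mult_closed unfolding is_line_iff by metis
qed (use assms in \<open>auto simp: line_points_def\<close>)

lemma spread_line: "is_line_spread q Fs \<Longrightarrow> S \<in> Fs \<Longrightarrow> is_line q S"
  by (simp add: is_line_spread_def)

lemma spread_ex1_line:
  assumes "is_line_spread q Fs" "(z :: 'a) \<noteq> 0"
  shows "\<exists>!S. S \<in> Fs \<and> z \<in> S"
proof -
  have "\<exists>!S. S \<in> Fs \<and> pt q z \<in> line_points q S"
    using assms unfolding is_line_spread_def points_def by blast
  moreover have "S \<in> Fs \<Longrightarrow> pt q z \<in> line_points q S \<longleftrightarrow> z \<in> S" for S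
    using assms pt_in_line_points_iff unfolding is_line_spread_def by blast
  ultimately show ?thesis by metis
qed

lemma card_spread:
  assumes "is_line_spread q (Fs :: 'a set set)"
  shows "card Fs = q ^ 2 + 1"
proof -
  have card_line: "card (S - {0}) = q ^ 2 - 1" if "S \<in> Fs" for S
    using assms that card_F_span zero_in_F_span
    unfolding is_line_spread_def is_line_iff by (metis card_Diff_singleton)
  have "q ^ 4 - 1 = card (UNIV - {0 :: 'a})"
    by (simp add: card_UNIV card_Diff_singleton)
  also have "UNIV - {0 :: 'a} = (\<Union>S\<in>Fs. S - {0})"
    using spread_ex1_line[OF assms] by blast
  also have "card \<dots> = (\<Sum>S\<in>Fs. card (S - {0}))"
    using spread_ex1_line[OF assms] by (intro card_UN_disjoint) auto
  also have "\<dots> = card Fs * (q ^ 2 - 1)"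
    using card_line by simp
  finally have "q ^ 4 - 1 = card Fs * (q ^ 2 - 1)" .
  moreover have "q ^ 4 - 1 = (q ^ 2 + 1) * (q ^ 2 - 1)"
    by (simp add: algebra_simps flip: power_add)
  moreover have "q ^ 2 - 1 > 0"
    using mult_le_mono[OF q_ge_2 q_ge_2] by (simp add: power2_eq_square)
  ultimately show ?thesis
    by (metis mult_right_cancel less_not_refl)
qed

lemma ratio_in_C_imp_desarg:
  assumes "F_indep a b" "a / b \<in> C"
  shows "F_span a b \<in> desarg_spread q"
proof -
  have "b \<noteq> 0"
    using F_indep_nonzero[OF assms(1)] by simp
  let ?B = "{c * b | c. c \<in> C}"
  have "F_span a b \<subseteq> ?B"
  proof
    fix y assume "y \<in> F_span a b"
    then obtain c d where cd: "c \<in> F" "d \<in> F" "y = c * a + d * b"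
      unfolding F_span_def by blast
    have "y = (c * (a / b) + d) * b"
      using cd \<open>b \<noteq> 0\<close> by (simp add: field_simps)
    moreover have "c * (a / b) + d \<in> C"
      using cd assms(2) F_subset_C by (blast intro: subf_add subf_mult)
    ultimately show "y \<in> ?B" by blast
  qed
  moreover have "card ?B \<le> card (F_span a b)"
  proof -
    have "card ?B \<le> card C"
      by (metis (no_types) Setcompr_eq_image card_image_le finite)
    also have "\<dots> \<le> q ^ 2"
      using card_roots_power_eq_le[of "q ^ 2" 1 0] mult_le_mono[OF q_ge_2 q_ge_2]
      by (simp add: subf_def power2_eq_square)
    finally show ?thesis
      using card_F_span[OF assms(1)] by simp
  qed
  ultimately have "F_span a b = ?B"
    using card_mono[of ?B "F_span a b"] by (intro card_subset_eq) auto
  thus ?thesis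
    unfolding desarg_spread_def using \<open>b \<noteq> 0\<close> by blast
qed

section \<open>Frobenius orbits and cubics over \<open>F\<close>\<close>

lemma power_q_power_fixed_imp_in_C:
  assumes "(z :: 'a) ^ (q ^ k) = z" "0 < k" "k < 4"
  shows "z \<in> C"
proof -
  have "z ^ q = z" if "z ^ (q ^ 3) = z"
    using power_q_power_Suc[of z 3] power_q4[of z] that by (simp add: eval_nat_numeral)
  moreover have "z ^ (q ^ 2) = z" if "z ^ q = z"
    using power_q_power_Suc[of z 1] that by (simp add: power2_eq_square)
  moreover have "k = 1 \<or> k = 2 \<or> k = 3"
    using assms(2,3) by auto
  ultimately show ?thesis
    using assms(1) by (auto simp: subf_def)
qed

lemma inj_on_frobenius_orbit:
  assumes "(z :: 'a) \<notin> C"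
  shows "inj_on (\<lambda>i. z ^ (q ^ i)) {..<4}"
proof -
  have "i = j" if "i \<le> j" "j < 4" "z ^ (q ^ i) = z ^ (q ^ j)" for i j
  proof -
    have "z ^ (q ^ j) = (z ^ (q ^ (j - i))) ^ (q ^ i)"
      using that(1) by (simp flip: power_mult power_add)
    hence "z ^ (q ^ (j - i)) = z"
      using that(3) power_q_power_inj by metis
    thus ?thesis
      using assms power_q_power_fixed_imp_in_C[of z "j - i"] that(1,2) by fastforce
  qed
  thus ?thesis
    unfolding inj_on_def by (metis lessThan_iff nat_le_linear)
qed

lemma poly_power_q_power:
  assumes "\<And>i. coeff P i \<in> F"
  shows "poly P ((x :: 'a) ^ (q ^ j)) = poly P x ^ (q ^ j)"
  using assms
proof (induction P)
  case (pCons a P)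
  have "a \<in> F" "\<And>i. coeff P i \<in> F"
    using pCons.prems[of 0] pCons.prems[of "Suc i" for i] by simp_all
  thus ?case
    using pCons.IH by (simp add: frobenius_add power_mult_distrib F_fixed)
qed (use q_ge_2 in simp)

lemma F_poly_root_in_C:
  assumes "P \<noteq> 0" "\<And>i. coeff P i \<in> F" "degree P \<le> 3" "poly P (z :: 'a) = 0"
  shows "z \<in> C"
proof (rule ccontr)
  assume "z \<notin> C"
  have "(\<lambda>i. z ^ (q ^ i)) ` {..<4} \<subseteq> {x. poly P x = 0}"
    using poly_power_q_power[OF assms(2)] assms(4) q_ge_2 by auto
  hence "card ((\<lambda>i. z ^ (q ^ i)) ` {..<4}) \<le> degree P"
    using card_poly_roots_bound[OF assms(1)] card_mono[OF poly_roots_finite[OF assms(1)]]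
    by (meson order_trans)
  moreover have "card ((\<lambda>i. z ^ (q ^ i)) ` {..<4}) = 4"
    using inj_on_frobenius_orbit[OF \<open>z \<notin> C\<close>] by (simp add: card_image)
  ultimately show False
    using assms(3) by simp
qed

lemma coeffs_in_F_cubic:
  "a \<in> F \<Longrightarrow> b \<in> F \<Longrightarrow> c \<in> F \<Longrightarrow> d \<in> F \<Longrightarrow> coeff [:a, b, c, d:] i \<in> F"
  using zero_in_F by (simp add: coeff_pCons split: nat.split)

text \<open>The symmetric functions of \<open>u, u\<^sup>q, u\<^sup>q\<^sup>2\<close> are the coefficients of
  \<open>(x - u)(x - u\<^sup>q)(x - u\<^sup>q\<^sup>2)\<close>, the minimal polynomial of \<open>u\<close> divided by
  \<open>x - u\<^sup>q\<^sup>3\<close>; an \<open>F\<close>-linear relation among them is therefore a cubic over \<open>F\<close>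
  vanishing at \<open>u\<^sup>q\<^sup>3\<close>.\<close>
lemma symmetric_functions_F_indep:
  fixes u :: 'a
  defines "z1 \<equiv> u ^ q" and "z2 \<equiv> u ^ (q ^ 2)"
  assumes "u \<notin> C" "A0 \<in> F" "A1 \<in> F" "A2 \<in> F" "A3 \<in> F"
    and rel: "A0 * (u * z1 * z2) + A1 * (u * z1 + u * z2 + z1 * z2) + A2 * (u + z1 + z2) + A3 = 0"
  shows "A0 = 0 \<and> A1 = 0 \<and> A2 = 0 \<and> A3 = 0"
proof -
  define z3 where "z3 = u ^ (q ^ 3)"
  have Suc: "(u ^ (q ^ i)) ^ q = u ^ (q ^ Suc i)" for i
    by (rule power_q_power_Suc[symmetric])
  have conj: "u ^ q = z1" "z1 ^ q = z2" "z2 ^ q = z3" "z3 ^ q = u"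
    unfolding z1_def z2_def z3_def using Suc[of 1] Suc[of 2] Suc[of 3] power_q4[of u]
    by (simp_all add: power2_eq_square)
  define E1 where "E1 = u + z1 + z2 + z3"
  define E2 where "E2 = u * z1 + u * z2 + u * z3 + z1 * z2 + z1 * z3 + z2 * z3"
  define E3 where "E3 = u * z1 * z2 + u * z1 * z3 + u * z2 * z3 + z1 * z2 * z3"
  have E: "E1 \<in> F" "E2 \<in> F" "E3 \<in> F"
    unfolding subf_def E1_def E2_def E3_def
    by (simp_all add: power_q_add power_mult_distrib conj ac_simps)
  define P where "P = [:A0 * E3 + A1 * E2 + A2 * E1 + A3, - (A0 * E2 + A1 * E1 + A2),
    A0 * E1 + A1, - A0:]"
  have coeffs: "coeff P i \<in> F" for i
    unfolding P_def using assms(4-7) E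
    by (intro coeffs_in_F_cubic F_add F_uminus subf_mult)
  have "poly P z3 = 0"
    using rel unfolding P_def E1_def E2_def E3_def by (simp add: algebra_simps)
  moreover have "degree P \<le> 3"
    unfolding P_def by (rule degree_le) (auto simp: coeff_pCons split: nat.split)
  moreover have "z3 \<notin> C"
    using assms(3) conj(4) subf_power[of z3 "q ^ 2" q] by auto
  ultimately have "P = 0"
    using F_poly_root_in_C[OF _ coeffs] by blast
  thus ?thesis
    unfolding P_def by auto
qed

section \<open>Images of spread lines\<close>

definition trinorm_points :: "'a set \<Rightarrow> 'a set set" where
  "trinorm_points S = (\<lambda>y. pt q (trinorm y)) ` (S - {0})"

lemma trinorm_points_spread_ex1:
  assumes sp: "is_line_spread q Fs" and "P \<in> points q"
  shows "\<exists>!S. S \<in> Fs \<and> P \<in> trinorm_points S"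
proof -
  obtain z where z: "z \<noteq> 0" "P = pt q z"
    using assms(2) unfolding points_def by auto
  obtain m where m: "\<And>z. z \<noteq> 0 \<Longrightarrow> pt q (trinorm (z ^ m)) = pt q z"
    using pt_trinorm_power_inverse by blast
  have zm: "z ^ m \<noteq> 0" using z(1) by simp
  then obtain S where S: "S \<in> Fs" "z ^ m \<in> S"
    using spread_ex1_line[OF sp] by blast
  show ?thesis
  proof (rule ex1I[of _ S])
    show "S \<in> Fs \<and> P \<in> trinorm_points S"
      unfolding trinorm_points_def using S zm m[OF z(1)] z(2) by force
  next
    fix S' assume S': "S' \<in> Fs \<and> P \<in> trinorm_points S'"
    then obtain y where y: "y \<in> S'" "y \<noteq> 0" "pt q (trinorm y) = pt q (trinorm (z ^ m))"
      unfolding trinorm_points_def using m[OF z(1)] z(2) by auto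
    hence "pt q (z ^ m) \<in> line_points q S'"
      unfolding line_points_def using pt_trinorm_inj[OF y(2) zm] by auto
    hence "z ^ m \<in> S'"
      using S' sp zm pt_in_line_points_iff unfolding is_line_spread_def by blast
    thus "S' = S"
      using spread_ex1_line[OF sp zm] S S' by blast
  qed
qed

lemma inj_on_trinorm_points:
  assumes sp: "is_line_spread q Fs"
  shows "inj_on trinorm_points Fs"
proof (rule inj_onI)
  fix S1 S2 assume S: "S1 \<in> Fs" "S2 \<in> Fs" "trinorm_points S1 = trinorm_points S2"
  obtain y where y: "y \<in> S1" "y \<noteq> 0"
    using line_nonzero[OF spread_line[OF sp S(1)]] by blast
  define P where "P = pt q (trinorm y)"
  have P1: "P \<in> trinorm_points S1"
    unfolding P_def trinorm_points_def using y by auto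
  hence P2: "P \<in> trinorm_points S2"
    using S(3) by simp
  have "P \<in> points q"
    unfolding P_def points_def using y(2) by simp
  thus "S1 = S2"
    using trinorm_points_spread_ex1[OF sp] S(1,2) P1 P2 by blast
qed

text \<open>Since \<open>trinorm\<close> permutes the points of \<open>C\<close>, the line \<open>C x\<close> goes to the line
  \<open>(trinorm x / x) * C x\<close>.\<close>
lemma trinorm_points_desarg:
  assumes "is_line q S" "S \<in> desarg_spread q"
  shows "\<exists>S'. is_line q S' \<and> trinorm_points S = line_points q S'"
proof -
  obtain x where x: "x \<noteq> 0" "S = {c * x | c. c \<in> C}"
    using assms(2) unfolding desarg_spread_def by auto
  define l where "l = trinorm x / x"
  have l: "l \<noteq> 0" "l * x = trinorm x"
    using x(1) by (simp_all add: l_def)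
  obtain m k where mk: "\<And>z. trinorm (z ^ m) = (z ^ norm_exp) ^ k * z"
    using trinorm_power_inverse by blast
  have "trinorm_points S = line_points q ((*) l ` S)"
  proof (intro set_eqI iffI)
    fix P assume "P \<in> trinorm_points S"
    then obtain y where "y \<in> S" "y \<noteq> 0" "P = pt q (trinorm y)"
      unfolding trinorm_points_def by auto
    then obtain c where c: "c \<in> C" "c \<noteq> 0" "P = pt q (trinorm (c * x))"
      unfolding x(2) by auto
    have "trinorm (c * x) = l * (trinorm c * x)"
      using l(2) by (simp add: trinorm_mult algebra_simps)
    moreover have "trinorm c * x \<in> S"
      using trinorm_in_C[OF c(1)] x(2) by blast
    ultimately show "P \<in> line_points q ((*) l ` S)"
      unfolding line_points_def using c x(1) l(1) by auto
  next
    fix P assume "P \<in> line_points q ((*) l ` S)"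
    then obtain z where z: "z \<in> (*) l ` S" "z \<noteq> 0" "P = pt q z"
      unfolding line_points_def by blast
    then obtain c where "c \<in> C" "z = l * (c * x)"
      unfolding x(2) by blast
    hence c: "c \<in> C" "c \<noteq> 0" "P = pt q (l * (c * x))"
      using z by auto
    have "trinorm (c ^ m * x) = (c ^ norm_exp) ^ k * (l * (c * x))"
      using l(2) by (simp add: trinorm_mult mk algebra_simps)
    moreover have "(c ^ norm_exp) ^ k \<in> F"
      using norm_power_in_F by (rule subf_power)
    ultimately have "pt q (trinorm (c ^ m * x)) = pt q (l * (c * x))"
      by (rule pt_eqI) (use c(2) x(1) in simp)
    moreover have "c ^ m * x \<in> S - {0}"
      using c x subf_power by auto
    ultimately show "P \<in> trinorm_points S"
      unfolding trinorm_points_def c(3) by (rule image_eqI[OF sym])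
  qed
  thus ?thesis
    using is_line_image_mult[OF assms(1) l(1)] by blast
qed

lemma trinorm_points_F_span:
  assumes "F_indep a b"
  shows "trinorm_points (F_span a b) =
    {pt q (trinorm (t0 * a + t1 * b)) | t0 t1. t0 \<in> F \<and> t1 \<in> F \<and> (t0, t1) \<noteq> (0, 0)}"
proof (intro set_eqI iffI)
  fix P assume "P \<in> trinorm_points (F_span a b)"
  then obtain y where y: "y \<in> F_span a b" "y \<noteq> 0" "P = pt q (trinorm y)"
    unfolding trinorm_points_def by auto
  then obtain c d where cd: "c \<in> F" "d \<in> F" "y = c * a + d * b"
    unfolding F_span_def by blast
  moreover have "(c, d) \<noteq> (0, 0)"
    using y(2) cd(3) by auto
  ultimately show "P \<in> {pt q (trinorm (t0 * a + t1 * b)) | t0 t1.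
      t0 \<in> F \<and> t1 \<in> F \<and> (t0, t1) \<noteq> (0, 0)}"
    using y(3) by blast
next
  fix P assume "P \<in> {pt q (trinorm (t0 * a + t1 * b)) | t0 t1.
      t0 \<in> F \<and> t1 \<in> F \<and> (t0, t1) \<noteq> (0, 0)}"
  then obtain t0 t1 where t: "t0 \<in> F" "t1 \<in> F" "(t0, t1) \<noteq> (0, 0)"
    "P = pt q (trinorm (t0 * a + t1 * b))"
    by blast
  moreover have "t0 * a + t1 * b \<in> F_span a b"
    unfolding F_span_def using t by blast
  moreover have "t0 * a + t1 * b \<noteq> 0"
    using assms t(1-3) unfolding F_indep_def by blast
  ultimately show "P \<in> trinorm_points (F_span a b)"
    unfolding trinorm_points_def by blast
qed

lemma trinorm_F_combination:
  assumes "b \<noteq> 0" "c \<in> F" "d \<in> F"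
  shows "trinorm (c * a + d * b) =
    trinorm b * ((c * (a / b) + d) * (c * (a / b) ^ q + d) * (c * (a / b) ^ (q ^ 2) + d))"
proof -
  have "c * a + d * b = b * (c * (a / b) + d)"
    using assms(1) by (simp add: field_simps)
  hence "trinorm (c * a + d * b) = trinorm b * trinorm (c * (a / b) + d)"
    by (simp only: trinorm_mult)
  thus ?thesis
    using power_q_power_F_affine[OF assms(2,3), of "a / b" 1]
      power_q_power_F_affine[OF assms(2,3), of "a / b" 2]
    by (simp add: trinorm_eq_product)
qed

lemma trinorm_points_3uple_image_span:
  assumes ab: "F_indep a b" and not_desarg: "F_span a b \<notin> desarg_spread q"
  shows "is_3uple_image q (trinorm_points (F_span a b))"
proof -
  have b: "b \<noteq> 0"
    using F_indep_nonzero[OF ab] by simp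
  define u where "u = a / b"
  define z1 where "z1 = u ^ q"
  define z2 where "z2 = u ^ (q ^ 2)"
  have u: "u \<notin> C"
    using ratio_in_C_imp_desarg[OF ab] not_desarg unfolding u_def by blast
  define e :: "nat \<Rightarrow> 'a" where "e i = trinorm b *
    (if i = 0 then u * z1 * z2 else if i = 1 then u * z1 + u * z2 + z1 * z2
     else if i = 2 then u + z1 + z2 else 1)" for i
  have expand: "trinorm (t0 * a + t1 * b) =
      t0^3 * e 0 + t0^2 * t1 * e 1 + t0 * t1^2 * e 2 + t1^3 * e 3"
    if "t0 \<in> F" "t1 \<in> F" for t0 t1
    using trinorm_F_combination[OF b that, of a, folded u_def, folded z1_def z2_def]
    by (simp add: e_def power2_eq_square power3_eq_cube algebra_simps)
  have indep: "\<forall>A. (\<forall>i<4. A i \<in> F) \<longrightarrow> (\<Sum>i<4. A i * e i) = 0 \<longrightarrow> (\<forall>i<4. A i = 0)"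
  proof (rule allI, intro impI)
    fix A :: "nat \<Rightarrow> 'a" assume AF: "\<forall>i<4. A i \<in> F" and rel: "(\<Sum>i<4. A i * e i) = 0"
    have "trinorm b * (A 0 * (u * z1 * z2) + A 1 * (u * z1 + u * z2 + z1 * z2)
        + A 2 * (u + z1 + z2) + A 3) = 0"
      using rel by (simp add: eval_nat_numeral e_def algebra_simps)
    moreover have "A 0 \<in> F" "A 1 \<in> F" "A 2 \<in> F" "A 3 \<in> F"
      using AF by simp_all
    ultimately have "A 0 = 0 \<and> A 1 = 0 \<and> A 2 = 0 \<and> A 3 = 0"
      using symmetric_functions_F_indep[OF u] b unfolding z1_def z2_def by simp
    moreover have "i = 0 \<or> i = 1 \<or> i = 2 \<or> i = 3" if "i < (4 :: nat)" for i
      using that by auto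
    ultimately show "\<forall>i<4. A i = 0"
      by blast
  qed
  have "{pt q (trinorm (t0 * a + t1 * b)) | t0 t1. t0 \<in> F \<and> t1 \<in> F \<and> (t0, t1) \<noteq> (0, 0)} =
      {pt q (t0^3 * e 0 + t0^2 * t1 * e 1 + t0 * t1^2 * e 2 + t1^3 * e 3) | t0 t1.
        t0 \<in> F \<and> t1 \<in> F \<and> (t0, t1) \<noteq> (0, 0)}"
    using expand by (intro Collect_cong) (metis (no_types, lifting))
  thus ?thesis
    unfolding is_3uple_image_def trinorm_points_F_span[OF ab] using indep by blast
qed

lemma trinorm_points_3uple_image:
  "is_line q S \<Longrightarrow> S \<notin> desarg_spread q \<Longrightarrow> is_3uple_image q (trinorm_points S)"
  unfolding is_line_iff using trinorm_points_3uple_image_span by blast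

end

theorem mainTheorem6:
  fixes q r :: nat and Fs :: "'a::{field,finite} set set"
  assumes "prime_power q"
    and "card (UNIV :: 'a set) = q ^ 4"
    and "r \<le> q ^ 2"
    and "is_line_spread q Fs"
    and "card (Fs \<inter> desarg_spread q) = r"
  shows "has_mixed_partition q r TYPE('a)"
proof -
  interpret gf_q4 q
    using assms(1,2) by unfold_locales
  note sp = assms(4)
  define D where "D = (desarg_spread q :: 'a set set)"
  have inj: "inj_on trinorm_points Fs"
    using inj_on_trinorm_points[OF sp] .
  show ?thesis
    unfolding has_mixed_partition_def
  proof (intro exI conjI)
    show "\<forall>X\<in>trinorm_points ` (Fs \<inter> D). \<exists>S. is_line q S \<and> X = line_points q S"
      using trinorm_points_desarg spread_line[OF sp] unfolding D_def by blast
    show "\<forall>X\<in>trinorm_points ` (Fs - D). is_3uple_image q X"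
      using trinorm_points_3uple_image spread_line[OF sp] unfolding D_def by blast
    show "trinorm_points ` (Fs \<inter> D) \<inter> trinorm_points ` (Fs - D) = {}"
      using inj_on_image_Int[OF inj, of "Fs \<inter> D" "Fs - D"] by auto
    show "card (trinorm_points ` (Fs \<inter> D)) = r"
      using assms(5) card_image[OF inj_on_subset[OF inj]] unfolding D_def by auto
    have "card (Fs - D) = q ^ 2 + 1 - r"
      using card_spread[OF sp] assms(5) card_Diff_subset_Int[of Fs D] unfolding D_def by simp
    thus "card (trinorm_points ` (Fs - D)) = q ^ 2 + 1 - r"
      using card_image[OF inj_on_subset[OF inj]] by auto
    show "\<forall>P\<in>points q. \<exists>!X. X \<in> trinorm_points ` (Fs \<inter> D) \<union> trinorm_points ` (Fs - D) \<and> P \<in> X"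
      using trinorm_points_spread_ex1[OF sp] by (auto simp flip: image_Un) blast
  qed
qed

end
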